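(* Let $\langle A,\to\rangle$ be a conditional algebra. There exists a dual lattice isomorphism between the lattice of congruences of $\langle A,\to\rangle$ and the lattice (ordered by inclusion) of $T_A$-closed subsets of the expanded Stone space $\langle\mathrm{Ul}(A),\tau_s,T_A\rangle$.
   Context: A conditional algebra is $\langle A,\to\rangle$ with $A$ a Boolean algebra and $\to$ binary with $a\to1=1$, $(a\to b)\wedge(a\to c)=a\to(b\wedge c)$, $(a\vee b)\to c\le(a\to c)\wedge(b\to c)$. $\mathrm{Ul}(A)$ is the Stone space of ultrafilters; closed sets are $\varphi(F)=\{u:F\subseteq u\}$ for filters $F$ (including $F=A$). $D^{\to}_u(F)=\{b:\exists a\in F,\ a\to b\in u\}$; $T_A(u,Z,v)$ iff there is a filter $F$ with $Z=\varphi(F)$ and $D^{\to}_u(F)\subseteq v$. For ultrafilters $x,y$, $\mathbf{C}(x,y)$ is the set of closed $Z$ with $T_A(x,Z,y)$. A closed set $Y$ is $T_A$-closed if for all $x,y$: if $x\in Y$ and $Z$ is a minimal element of $\mathbf{C}(x,y)$ under inclusion, then $Z\subseteq Y$ and $y\in Y$. *)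

theory Defs
  imports Main
begin

definition conditional_algebra :: "('a::boolean_algebra \<Rightarrow> 'a \<Rightarrow> 'a) \<Rightarrow> bool" where
  "conditional_algebra imp \<longleftrightarrow>
     (\<forall>a. imp a top = top) \<and>
     (\<forall>a b c. inf (imp a b) (imp a c) = imp a (inf b c)) \<and>
     (\<forall>a b c. imp (sup a b) c \<le> inf (imp a c) (imp b c))"

definition congruence :: "('a::boolean_algebra \<Rightarrow> 'a \<Rightarrow> 'a) \<Rightarrow> 'a rel \<Rightarrow> bool" where
  "congruence imp \<theta> \<longleftrightarrow> equiv UNIV \<theta> \<and>
     (\<forall>a b c d. (a, b) \<in> \<theta> \<longrightarrow> (c, d) \<in> \<theta> \<longrightarrow>
        (inf a c, inf b d) \<in> \<theta> \<and> (sup a c, sup b d) \<in> \<theta> \<and> (imp a c, imp b d) \<in> \<theta>) \<and>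
     (\<forall>a b. (a, b) \<in> \<theta> \<longrightarrow> (- a, - b) \<in> \<theta>)"

definition is_filter :: "'a::boolean_algebra set \<Rightarrow> bool" where
  "is_filter F \<longleftrightarrow> top \<in> F \<and> (\<forall>a\<in>F. \<forall>b. a \<le> b \<longrightarrow> b \<in> F) \<and> (\<forall>a\<in>F. \<forall>b\<in>F. inf a b \<in> F)"

definition ultrafilter :: "'a::boolean_algebra set \<Rightarrow> bool" where
  "ultrafilter u \<longleftrightarrow> is_filter u \<and> u \<noteq> UNIV \<and>
     (\<forall>F. is_filter F \<and> u \<subseteq> F \<and> F \<noteq> UNIV \<longrightarrow> F = u)"

definition Ul :: "'a::boolean_algebra set set" where
  "Ul = {u. ultrafilter u}"

definition phi :: "'a::boolean_algebra set \<Rightarrow> 'a set set" where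
  "phi F = {u \<in> Ul. F \<subseteq> u}"

text \<open>Closed subsets of the Stone space: exactly the sets phi F for filters F.\<close>
definition stone_closed :: "'a::boolean_algebra set set \<Rightarrow> bool" where
  "stone_closed Z \<longleftrightarrow> (\<exists>F. is_filter F \<and> Z = phi F)"

definition D_imp :: "('a::boolean_algebra \<Rightarrow> 'a \<Rightarrow> 'a) \<Rightarrow> 'a set \<Rightarrow> 'a set \<Rightarrow> 'a set" where
  "D_imp imp u F = {b. \<exists>a\<in>F. imp a b \<in> u}"

definition T_A :: "('a::boolean_algebra \<Rightarrow> 'a \<Rightarrow> 'a) \<Rightarrow> 'a set \<Rightarrow> 'a set set \<Rightarrow> 'a set \<Rightarrow> bool" where
  "T_A imp u Z v \<longleftrightarrow> (\<exists>F. is_filter F \<and> Z = phi F \<and> D_imp imp u F \<subseteq> v)"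

definition C_set :: "('a::boolean_algebra \<Rightarrow> 'a \<Rightarrow> 'a) \<Rightarrow> 'a set \<Rightarrow> 'a set \<Rightarrow> 'a set set set" where
  "C_set imp x y = {Z. stone_closed Z \<and> T_A imp x Z y}"

definition TA_closed :: "('a::boolean_algebra \<Rightarrow> 'a \<Rightarrow> 'a) \<Rightarrow> 'a set set \<Rightarrow> bool" where
  "TA_closed imp Y \<longleftrightarrow> stone_closed Y \<and>
     (\<forall>x\<in>Ul. \<forall>y\<in>Ul. \<forall>Z. x \<in> Y \<and> Z \<in> C_set imp x y \<and>
        (\<forall>Z'\<in>C_set imp x y. Z' \<subseteq> Z \<longrightarrow> Z' = Z) \<longrightarrow> Z \<subseteq> Y \<and> y \<in> Y)"

end

theory Submission
  imports Defs
begin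

text \<open>
  A congruence of the Boolean reduct is determined by its class of top, a filter F, and is
  recovered from it as {(a, b). a \<sqinter> h = b \<sqinter> h for some h \<in> F}; it respects \<rightarrow> exactly when
  F is closed under a \<rightarrow> _ and contains -((a \<sqinter> f) \<rightarrow> c) \<squnion> (a \<rightarrow> c) for f \<in> F. Since
  F \<mapsto> phi F reverses inclusion and is injective on filters (Stone duality), it remains to show
  that phi F is T_A-closed exactly for these filters. By Zorn's lemma the minimal elements of
  C x y are the sets phi M for filters M maximal with D x M \<subseteq> y. When F satisfies the
  conditions and F \<subseteq> x, joining F to such an M does not enlarge D x M, whence F \<subseteq> M.
  Conversely, a failure of a condition at an ultrafilter x \<supseteq> F produces such an M and y
  witnessing that phi F is not T_A-closed.
\<close>

section \<open>Filters and ultrafilters of a Boolean algebra\<close>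

lemma is_filter_top: "is_filter F \<Longrightarrow> top \<in> F"
  unfolding is_filter_def by blast

lemma is_filter_up: "is_filter F \<Longrightarrow> a \<in> F \<Longrightarrow> a \<le> b \<Longrightarrow> b \<in> F"
  unfolding is_filter_def by blast

lemma is_filter_inf: "is_filter F \<Longrightarrow> a \<in> F \<Longrightarrow> b \<in> F \<Longrightarrow> inf a b \<in> F"
  unfolding is_filter_def by blast

lemma is_filter_mp:
  assumes "is_filter F" and "a \<in> F" and "sup (- a) b \<in> F"
  shows "b \<in> F"
proof -
  have "inf a (sup (- a) b) \<le> b" by (simp add: inf_sup_distrib1)
  then show ?thesis using assms is_filter_inf is_filter_up by blast
qed

lemma is_filter_bot: "is_filter F \<Longrightarrow> bot \<in> F \<Longrightarrow> F = UNIV"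
  using is_filter_up by fastforce

lemma is_filter_Union_chain:
  assumes "C \<noteq> {}" and "subset.chain A C" and "\<forall>G\<in>A. is_filter G"
  shows "is_filter (\<Union>C)"
proof -
  have filters: "\<forall>G\<in>C. is_filter G" and chain: "\<forall>X\<in>C. \<forall>Y\<in>C. X \<subseteq> Y \<or> Y \<subseteq> X"
    using assms(2,3) unfolding subset.chain_def by blast+
  show ?thesis
    unfolding is_filter_def
  proof (intro conjI ballI allI impI)
    show "top \<in> \<Union>C" using assms(1) filters is_filter_top by blast
  next
    fix a b assume "a \<in> \<Union>C" "a \<le> b"
    then show "b \<in> \<Union>C" using filters is_filter_up by blast
  next
    fix a b assume "a \<in> \<Union>C" "b \<in> \<Union>C"
    then obtain X Y where "X \<in> C" "a \<in> X" "Y \<in> C" "b \<in> Y" by blast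
    then show "inf a b \<in> \<Union>C"
      using chain filters is_filter_inf by (metis UnionI subsetD)
  qed
qed

lemma maximal_filter_exists:
  assumes "is_filter G\<^sub>0" and "Q G\<^sub>0"
    and chain_closed: "\<And>C. C \<noteq> {} \<Longrightarrow> subset.chain {G. is_filter G \<and> G\<^sub>0 \<subseteq> G \<and> Q G} C \<Longrightarrow> Q (\<Union>C)"
  obtains M where "is_filter M" "G\<^sub>0 \<subseteq> M" "Q M"
    "\<And>G. is_filter G \<Longrightarrow> M \<subseteq> G \<Longrightarrow> Q G \<Longrightarrow> G = M"
proof -
  let ?A = "{G. is_filter G \<and> G\<^sub>0 \<subseteq> G \<and> Q G}"
  have "\<exists>M\<in>?A. \<forall>X\<in>?A. M \<subseteq> X \<longrightarrow> X = M"
  proof (rule subset_Zorn_nonempty)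
    show "?A \<noteq> {}" using assms(1,2) by blast
  next
    fix C assume C: "C \<noteq> {}" "subset.chain ?A C"
    then have "is_filter (\<Union>C)" by (rule is_filter_Union_chain) blast
    moreover have "G\<^sub>0 \<subseteq> \<Union>C" using C unfolding subset.chain_def by blast
    ultimately show "\<Union>C \<in> ?A" using chain_closed C by blast
  qed
  then show ?thesis using that by (metis (mono_tags, lifting) mem_Collect_eq subset_trans)
qed

definition filter_join :: "'a::boolean_algebra set \<Rightarrow> 'a set \<Rightarrow> 'a set" where
  "filter_join F G = {b. \<exists>f\<in>F. \<exists>g\<in>G. inf f g \<le> b}"

definition principal :: "'a::boolean_algebra \<Rightarrow> 'a set" where
  "principal a = {b. a \<le> b}"

lemma is_filter_principal: "is_filter (principal a)"
  unfolding is_filter_def principal_def by auto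

lemma is_filter_join:
  assumes F: "is_filter F" and G: "is_filter G"
  shows "is_filter (filter_join F G)"
  unfolding is_filter_def
proof (intro conjI ballI allI impI)
  show "top \<in> filter_join F G"
    unfolding filter_join_def using is_filter_top[OF F] is_filter_top[OF G] by force
next
  fix a b assume "a \<in> filter_join F G" "a \<le> b"
  then show "b \<in> filter_join F G" unfolding filter_join_def using order_trans by blast
next
  fix a b assume "a \<in> filter_join F G" "b \<in> filter_join F G"
  then obtain f g f' g' where fg: "f \<in> F" "g \<in> G" "inf f g \<le> a" "f' \<in> F" "g' \<in> G" "inf f' g' \<le> b"
    unfolding filter_join_def by blast
  have "inf (inf f f') (inf g g') = inf (inf f g) (inf f' g')" by (simp add: inf_aci)
  also have "\<dots> \<le> inf a b" using fg(3,6) by (rule inf_mono)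
  finally have "inf (inf f f') (inf g g') \<le> inf a b" .
  moreover have "inf f f' \<in> F" "inf g g' \<in> G" using fg is_filter_inf F G by blast+
  ultimately show "inf a b \<in> filter_join F G" unfolding filter_join_def by blast
qed

lemma filter_join_upper1: "is_filter G \<Longrightarrow> F \<subseteq> filter_join F G"
  unfolding filter_join_def by (blast dest: is_filter_top intro: inf_le1)

lemma filter_join_upper2: "is_filter F \<Longrightarrow> G \<subseteq> filter_join F G"
  unfolding filter_join_def by (blast dest: is_filter_top intro: inf_le2)

lemma mem_filter_join_principal:
  assumes "is_filter G"
  shows "b \<in> filter_join (principal a) G \<longleftrightarrow> sup (- a) b \<in> G"
proof
  assume "b \<in> filter_join (principal a) G"
  then obtain f g where "a \<le> f" "g \<in> G" "inf f g \<le> b"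
    unfolding filter_join_def principal_def by blast
  then have "g \<le> sup (- a) b" by (metis inf_commute inf_mono order.trans order_refl shunt1)
  then show "sup (- a) b \<in> G" using assms \<open>g \<in> G\<close> is_filter_up by blast
next
  assume "sup (- a) b \<in> G"
  moreover have "inf a (sup (- a) b) \<le> b" by (simp add: inf_sup_distrib1)
  moreover have "a \<in> principal a" by (simp add: principal_def)
  ultimately show "b \<in> filter_join (principal a) G"
    unfolding filter_join_def by blast
qed

lemma ultrafilter_iff:
  "ultrafilter u \<longleftrightarrow> is_filter u \<and> bot \<notin> u \<and> (\<forall>a. a \<in> u \<or> - a \<in> u)"
proof
  assume u: "ultrafilter u"
  then have filter: "is_filter u" and proper: "u \<noteq> UNIV" unfolding ultrafilter_def by auto
  have "a \<in> u \<or> - a \<in> u" for a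
  proof (rule ccontr)
    assume a: "\<not> (a \<in> u \<or> - a \<in> u)"
    let ?J = "filter_join (principal a) u"
    have "a \<in> ?J" "u \<subseteq> ?J" "is_filter ?J"
      using filter_join_upper1[OF filter] filter_join_upper2[OF is_filter_principal]
        is_filter_join[OF is_filter_principal filter]
      unfolding principal_def by blast+
    then have "?J = UNIV" using u a unfolding ultrafilter_def by blast
    then show False using a mem_filter_join_principal[OF filter, of bot a] by simp
  qed
  then show "is_filter u \<and> bot \<notin> u \<and> (\<forall>a. a \<in> u \<or> - a \<in> u)"
    using filter proper is_filter_bot by blast
next
  assume u: "is_filter u \<and> bot \<notin> u \<and> (\<forall>a. a \<in> u \<or> - a \<in> u)"
  have "F = u" if F: "is_filter F" "u \<subseteq> F" "F \<noteq> UNIV" for F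
  proof (rule ccontr)
    assume "F \<noteq> u"
    then obtain b where "b \<in> F" "- b \<in> F" using u F(2) by blast
    then have "bot \<in> F" using is_filter_inf[OF F(1)] by fastforce
    then show False using is_filter_bot F by blast
  qed
  then show "ultrafilter u" unfolding ultrafilter_def using u by blast
qed

text \<open>A maximal filter omitting e is prime: if it omits both a and -a, it contains
  both -a \<squnion> e and a \<squnion> e, hence their meet e.\<close>
lemma ultrafilter_extension:
  assumes F: "is_filter F" and "e \<notin> F"
  obtains u where "u \<in> Ul" "F \<subseteq> u" "e \<notin> u"
proof -
  obtain M where M: "is_filter M" "F \<subseteq> M" "e \<notin> M"
    and maximal: "\<And>G. is_filter G \<Longrightarrow> M \<subseteq> G \<Longrightarrow> e \<notin> G \<Longrightarrow> G = M"
    by (rule maximal_filter_exists[of F "\<lambda>G. e \<notin> G"]) (use assms in \<open>auto simp: subset.chain_def\<close>)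
  have sup_mem: "sup (- a) e \<in> M" if "a \<notin> M" for a
  proof -
    have "a \<in> filter_join (principal a) M"
      using filter_join_upper1[OF M(1)] unfolding principal_def by blast
    then have "e \<in> filter_join (principal a) M"
      using maximal[OF is_filter_join[OF is_filter_principal M(1)]]
        filter_join_upper2[OF is_filter_principal] \<open>a \<notin> M\<close> by blast
    then show ?thesis using mem_filter_join_principal[OF M(1)] by blast
  qed
  have "a \<in> M \<or> - a \<in> M" for a
  proof (rule ccontr)
    assume "\<not> (a \<in> M \<or> - a \<in> M)"
    then have "inf (sup (- a) e) (sup a e) \<in> M"
      using sup_mem[of a] sup_mem[of "- a"] is_filter_inf[OF M(1)] by simp
    moreover have "inf (sup (- a) e) (sup a e) = e"
      by (simp add: sup_inf_distrib2[symmetric])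
    ultimately show False using M(3) by simp
  qed
  moreover have "bot \<notin> M" using M is_filter_up[OF M(1) _ bot_least] by blast
  ultimately have "M \<in> Ul" unfolding Ul_def using ultrafilter_iff M(1) by blast
  then show ?thesis using that M by blast
qed

lemma Ul_filter: "u \<in> Ul \<Longrightarrow> is_filter u"
  unfolding Ul_def ultrafilter_def by blast

lemma Ul_compl: "u \<in> Ul \<Longrightarrow> a \<in> u \<or> - a \<in> u"
  unfolding Ul_def using ultrafilter_iff by blast

lemma phi_subset_phi_iff:
  assumes "is_filter F" and G: "is_filter G"
  shows "phi G \<subseteq> phi F \<longleftrightarrow> F \<subseteq> G"
proof
  assume phi: "phi G \<subseteq> phi F"
  show "F \<subseteq> G"
  proof
    fix f assume "f \<in> F"
    show "f \<in> G"
    proof (rule ccontr)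
      assume "f \<notin> G"
      then obtain u where "u \<in> Ul" "G \<subseteq> u" "f \<notin> u" using ultrafilter_extension[OF G] by blast
      then show False using phi \<open>f \<in> F\<close> unfolding phi_def by blast
    qed
  qed
qed (auto simp: phi_def)

section \<open>Congruences of a Boolean algebra and filters\<close>

definition top_class :: "'a rel \<Rightarrow> 'a::boolean_algebra set" where
  "top_class \<theta> = {a. (a, top) \<in> \<theta>}"

definition filter_congruence :: "'a::boolean_algebra set \<Rightarrow> 'a rel" where
  "filter_congruence F = {(a, b). \<exists>h\<in>F. inf a h = inf b h}"

lemma congruenceD:
  assumes "congruence imp \<theta>"
  shows congruence_refl: "(a, a) \<in> \<theta>"
    and congruence_sym: "(a, b) \<in> \<theta> \<Longrightarrow> (b, a) \<in> \<theta>"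
    and congruence_trans: "(a, b) \<in> \<theta> \<Longrightarrow> (b, c) \<in> \<theta> \<Longrightarrow> (a, c) \<in> \<theta>"
    and congruence_inf: "(a, b) \<in> \<theta> \<Longrightarrow> (c, d) \<in> \<theta> \<Longrightarrow> (inf a c, inf b d) \<in> \<theta>"
    and congruence_sup: "(a, b) \<in> \<theta> \<Longrightarrow> (c, d) \<in> \<theta> \<Longrightarrow> (sup a c, sup b d) \<in> \<theta>"
    and congruence_imp: "(a, b) \<in> \<theta> \<Longrightarrow> (c, d) \<in> \<theta> \<Longrightarrow> (imp a c, imp b d) \<in> \<theta>"
    and congruence_compl: "(a, b) \<in> \<theta> \<Longrightarrow> (- a, - b) \<in> \<theta>"
  using assms unfolding congruence_def equiv_def refl_on_def sym_def trans_def by blast+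

lemma is_filter_top_class:
  assumes \<theta>: "congruence imp \<theta>"
  shows "is_filter (top_class \<theta>)"
  unfolding is_filter_def top_class_def
proof (intro conjI ballI allI impI; simp)
  show "(top, top) \<in> \<theta>" by (rule congruence_refl[OF \<theta>])
next
  fix a b assume "(a, top) \<in> \<theta>" "a \<le> b"
  then show "(b, top) \<in> \<theta>"
    using congruence_sup[OF \<theta> _ congruence_refl[OF \<theta>], of a top b] by (simp add: sup_absorb2)
next
  fix a b assume "(a, top) \<in> \<theta>" "(b, top) \<in> \<theta>"
  then show "(inf a b, top) \<in> \<theta>" using congruence_inf[OF \<theta>] by fastforce
qed

text \<open>The witness is the biconditional of a and b, which is congruent to top.\<close>
lemma filter_congruence_top_class:
  assumes \<theta>: "congruence imp \<theta>"
  shows "filter_congruence (top_class \<theta>) = \<theta>"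
proof (intro set_eqI iffI; clarify)
  fix a b assume "(a, b) \<in> \<theta>"
  let ?h = "sup (inf a b) (inf (- a) (- b))"
  have "(inf a b, inf a a) \<in> \<theta>" "(inf (- a) (- b), inf (- a) (- a)) \<in> \<theta>"
    using \<open>(a, b) \<in> \<theta>\<close> by (meson congruenceD \<theta>)+
  then have "(?h, sup a (- a)) \<in> \<theta>" using congruence_sup[OF \<theta>] by fastforce
  then have "?h \<in> top_class \<theta>" by (simp add: top_class_def)
  moreover have "inf a ?h = inf b ?h" by (simp add: inf_sup_distrib1 inf_aci)
  ultimately show "(a, b) \<in> filter_congruence (top_class \<theta>)"
    unfolding filter_congruence_def by blast
next
  fix a b assume "(a, b) \<in> filter_congruence (top_class \<theta>)"
  then obtain h where h: "(h, top) \<in> \<theta>" "inf a h = inf b h"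
    unfolding filter_congruence_def top_class_def by blast
  have "(inf x h, x) \<in> \<theta>" for x using congruence_inf[OF \<theta> congruence_refl[OF \<theta>] h(1)] by simp
  then show "(a, b) \<in> \<theta>" using h(2) by (metis congruence_sym congruence_trans \<theta>)
qed

lemma top_class_filter_congruence:
  assumes F: "is_filter F"
  shows "top_class (filter_congruence F) = F"
proof (intro set_eqI iffI)
  fix a assume "a \<in> top_class (filter_congruence F)"
  then obtain h where "h \<in> F" "inf a h = h"
    unfolding top_class_def filter_congruence_def by auto
  then show "a \<in> F" using is_filter_up[OF F] by (metis inf.orderI inf_commute)
next
  fix a assume "a \<in> F"
  moreover have "inf a a = inf top a" by simp
  ultimately show "a \<in> top_class (filter_congruence F)"
    unfolding top_class_def filter_congruence_def by blast
qed

lemma filter_congruence_common_witness: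
  assumes F: "is_filter F"
    and "(a, b) \<in> filter_congruence F" and "(c, d) \<in> filter_congruence F"
  obtains h where "h \<in> F" "inf a h = inf b h" "inf c h = inf d h"
proof -
  obtain h\<^sub>1 h\<^sub>2 where h: "h\<^sub>1 \<in> F" "inf a h\<^sub>1 = inf b h\<^sub>1" "h\<^sub>2 \<in> F" "inf c h\<^sub>2 = inf d h\<^sub>2"
    using assms(2,3) unfolding filter_congruence_def by blast
  have "inf a (inf h\<^sub>1 h\<^sub>2) = inf b (inf h\<^sub>1 h\<^sub>2)" "inf c (inf h\<^sub>1 h\<^sub>2) = inf d (inf h\<^sub>1 h\<^sub>2)"
    using h(2,4) by (metis inf_assoc inf_commute)+
  then show ?thesis using that is_filter_inf[OF F h(1,3)] by blast
qed

lemma equiv_filter_congruence: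
  assumes F: "is_filter F"
  shows "equiv UNIV (filter_congruence F)"
proof (rule equivI)
  show "filter_congruence F \<subseteq> UNIV \<times> UNIV" by simp
  show "refl (filter_congruence F)"
    using is_filter_top[OF F] by (auto intro: refl_onI simp: filter_congruence_def)
  show "sym (filter_congruence F)"
    unfolding filter_congruence_def by (rule symI) (blast intro: sym)
  show "trans (filter_congruence F)"
  proof (rule transI)
    fix a b c assume "(a, b) \<in> filter_congruence F" "(b, c) \<in> filter_congruence F"
    then obtain h where "h \<in> F" "inf a h = inf b h" "inf b h = inf c h"
      using filter_congruence_common_witness[OF F] by blast
    then show "(a, c) \<in> filter_congruence F" unfolding filter_congruence_def by auto
  qed
qed

lemma filter_congruence_inf_sup:
  assumes F: "is_filter F"
    and "(a, b) \<in> filter_congruence F" and "(c, d) \<in> filter_congruence F"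
  shows "(inf a c, inf b d) \<in> filter_congruence F" and "(sup a c, sup b d) \<in> filter_congruence F"
proof -
  obtain h where h: "h \<in> F" "inf a h = inf b h" "inf c h = inf d h"
    using filter_congruence_common_witness[OF assms] .
  have "inf (inf x y) h = inf (inf x h) (inf y h)" for x y by (simp add: inf_aci)
  then show "(inf a c, inf b d) \<in> filter_congruence F"
    using h unfolding filter_congruence_def by (auto intro!: bexI[of _ h])
  have "inf (sup x y) h = sup (inf x h) (inf y h)" for x y by (rule inf_sup_distrib2)
  then show "(sup a c, sup b d) \<in> filter_congruence F"
    using h unfolding filter_congruence_def by (auto intro!: bexI[of _ h])
qed

lemma filter_congruence_compl:
  assumes "(a, b) \<in> filter_congruence F"
  shows "(- a, - b) \<in> filter_congruence F"
proof -
  obtain h where h: "h \<in> F" "inf a h = inf b h"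
    using assms unfolding filter_congruence_def by blast
  have "inf (- a) h = inf (- inf a h) h" by (simp add: inf_sup_distrib2)
  also have "\<dots> = inf (- b) h" using h(2) by (simp add: inf_sup_distrib2)
  finally show ?thesis using h(1) unfolding filter_congruence_def by blast
qed

lemma top_class_subset_iff:
  assumes "congruence imp \<theta>" and "congruence imp \<psi>"
  shows "top_class \<theta> \<subseteq> top_class \<psi> \<longleftrightarrow> \<theta> \<subseteq> \<psi>"
proof
  assume "top_class \<theta> \<subseteq> top_class \<psi>"
  then have "filter_congruence (top_class \<theta>) \<subseteq> filter_congruence (top_class \<psi>)"
    unfolding filter_congruence_def by blast
  then show "\<theta> \<subseteq> \<psi>" using filter_congruence_top_class assms by metis
qed (auto simp: top_class_def)

section \<open>Congruence filters of a conditional algebra\<close>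

text \<open>The two closure conditions make imp compatible with the congruence of F in its second
  and first argument respectively; the second one says that modulo F the antecedent a \<sqinter> f
  may be replaced by a.\<close>
definition congruence_filter :: "('a::boolean_algebra \<Rightarrow> 'a \<Rightarrow> 'a) \<Rightarrow> 'a set \<Rightarrow> bool" where
  "congruence_filter imp F \<longleftrightarrow> is_filter F \<and> (\<forall>f\<in>F. \<forall>a. imp a f \<in> F) \<and>
     (\<forall>f\<in>F. \<forall>a c. sup (- imp (inf a f) c) (imp a c) \<in> F)"

lemma congruence_filterD:
  assumes "congruence_filter imp F"
  shows congruence_filter_is_filter: "is_filter F"
    and congruence_filter_imp: "f \<in> F \<Longrightarrow> imp a f \<in> F"
    and congruence_filter_imp_inf: "f \<in> F \<Longrightarrow> sup (- imp (inf a f) c) (imp a c) \<in> F"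
  using assms unfolding congruence_filter_def by blast+

context
  fixes imp :: "'a::boolean_algebra \<Rightarrow> 'a \<Rightarrow> 'a"
  assumes conditional: "conditional_algebra imp"
begin

lemma imp_top: "imp a top = top"
  using conditional unfolding conditional_algebra_def by blast

lemma imp_inf: "imp a (inf b c) = inf (imp a b) (imp a c)"
  using conditional unfolding conditional_algebra_def by simp

lemma imp_mono:
  assumes "b \<le> c"
  shows "imp a b \<le> imp a c"
proof -
  have "imp a b = inf (imp a b) (imp a c)" using assms imp_inf[of a b c] by (simp add: inf_absorb1)
  then show ?thesis by (metis inf_le2)
qed

lemma imp_antimono:
  assumes "a \<le> b"
  shows "imp b c \<le> imp a c"
proof -
  have "imp (sup a b) c \<le> inf (imp a c) (imp b c)"
    using conditional unfolding conditional_algebra_def by blast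
  then show ?thesis using assms by (simp add: sup_absorb2)
qed

lemma congruence_filter_top_class:
  assumes \<theta>: "congruence imp \<theta>"
  shows "congruence_filter imp (top_class \<theta>)"
  unfolding congruence_filter_def
proof (intro conjI ballI allI)
  show "is_filter (top_class \<theta>)" using is_filter_top_class[OF \<theta>] .
next
  fix f a assume "f \<in> top_class \<theta>"
  then have "(imp a f, imp a top) \<in> \<theta>"
    using congruence_imp[OF \<theta> congruence_refl[OF \<theta>]] by (simp add: top_class_def)
  then show "imp a f \<in> top_class \<theta>" by (simp add: top_class_def imp_top)
next
  fix f a c assume "f \<in> top_class \<theta>"
  then have "(inf a f, a) \<in> \<theta>"
    using congruence_inf[OF \<theta> congruence_refl[OF \<theta>]] by (fastforce simp: top_class_def)
  then have "(- imp (inf a f) c, - imp a c) \<in> \<theta>"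
    by (meson \<theta> congruence_compl congruence_imp congruence_refl)
  then have "(sup (- imp (inf a f) c) (imp a c), sup (- imp a c) (imp a c)) \<in> \<theta>"
    using congruence_sup[OF \<theta> _ congruence_refl[OF \<theta>]] by blast
  then show "sup (- imp (inf a f) c) (imp a c) \<in> top_class \<theta>"
    by (simp add: top_class_def compl_sup_top)
qed

lemma filter_congruence_imp:
  assumes F: "congruence_filter imp F"
    and ab: "(a, b) \<in> filter_congruence F" and cd: "(c, d) \<in> filter_congruence F"
  shows "(imp a c, imp b d) \<in> filter_congruence F"
proof -
  have "sym (filter_congruence F)" "trans (filter_congruence F)"
    using equiv_filter_congruence[OF congruence_filter_is_filter[OF F]] by (auto elim: equivE)
  note sym = symD[OF this(1)] and trans = transD[OF this(2)]
  have right: "(imp x c, imp x d) \<in> filter_congruence F" for x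
  proof -
    obtain h where h: "h \<in> F" "inf c h = inf d h" using cd unfolding filter_congruence_def by blast
    have "inf (imp x c) (imp x h) = inf (imp x d) (imp x h)"
      using h(2) by (simp flip: imp_inf)
    then show ?thesis
      using congruence_filter_imp[OF F h(1)] unfolding filter_congruence_def by blast
  qed
  have left: "(imp x z, imp (inf x h) z) \<in> filter_congruence F" if "h \<in> F" for x h z
  proof -
    let ?e = "sup (- imp (inf x h) z) (imp x z)"
    have "imp x z \<le> imp (inf x h) z" by (simp add: imp_antimono)
    then have "inf (imp x z) ?e = inf (imp (inf x h) z) ?e"
      by (simp add: inf_sup_distrib1 inf_absorb1 inf_absorb2 sup_absorb2)
    then show ?thesis
      using congruence_filter_imp_inf[OF F that] unfolding filter_congruence_def by blast
  qed
  obtain h where h: "h \<in> F" "inf a h = inf b h" using ab unfolding filter_congruence_def by blast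
  have "(imp a d, imp (inf b h) d) \<in> filter_congruence F" using left[of h a d] h by simp
  then have "(imp a d, imp b d) \<in> filter_congruence F" using trans sym left[of h b d] h(1) by blast
  then show ?thesis using trans[OF right] by blast
qed

lemma congruence_filter_congruence:
  assumes "congruence_filter imp F"
  shows "congruence imp (filter_congruence F)"
proof -
  have F: "is_filter F" using congruence_filter_is_filter[OF assms] .
  show ?thesis
    unfolding congruence_def
    by (intro conjI allI impI equiv_filter_congruence[OF F] filter_congruence_inf_sup[OF F]
        filter_congruence_imp[OF assms] filter_congruence_compl)
qed

lemma bij_betw_top_class:
  "bij_betw top_class {\<theta>. congruence imp \<theta>} {F. congruence_filter imp F}"
  by (rule bij_betw_byWitness[where f' = filter_congruence])
    (auto simp: filter_congruence_top_class top_class_filter_congruence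
      congruence_filter_top_class congruence_filter_congruence congruence_filter_is_filter)

end

section \<open>T_A-closed sets\<close>

lemma minimal_C_set_exists:
  assumes "is_filter G\<^sub>0" and "D_imp imp x G\<^sub>0 \<subseteq> y"
  obtains M where "is_filter M" "G\<^sub>0 \<subseteq> M" "D_imp imp x M \<subseteq> y" "phi M \<in> C_set imp x y"
    "\<forall>Z\<in>C_set imp x y. Z \<subseteq> phi M \<longrightarrow> Z = phi M"
proof -
  have chain_closed: "D_imp imp x (\<Union>C) \<subseteq> y"
    if "subset.chain {G. is_filter G \<and> G\<^sub>0 \<subseteq> G \<and> D_imp imp x G \<subseteq> y} C" for C
    using that unfolding subset.chain_def D_imp_def by blast
  obtain M where M: "is_filter M" "G\<^sub>0 \<subseteq> M" "D_imp imp x M \<subseteq> y"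
    and maximal: "\<And>G. is_filter G \<Longrightarrow> M \<subseteq> G \<Longrightarrow> D_imp imp x G \<subseteq> y \<Longrightarrow> G = M"
    by (rule maximal_filter_exists[of G\<^sub>0 "\<lambda>G. D_imp imp x G \<subseteq> y"]) (use assms chain_closed in auto)
  have "Z = phi M" if Z: "Z \<in> C_set imp x y" "Z \<subseteq> phi M" for Z
  proof -
    obtain G where G: "is_filter G" "Z = phi G" "D_imp imp x G \<subseteq> y"
      using Z(1) unfolding C_set_def T_A_def by blast
    then have "M \<subseteq> G" using phi_subset_phi_iff[OF M(1) G(1)] Z(2) by blast
    then show ?thesis using maximal G by blast
  qed
  moreover have "phi M \<in> C_set imp x y"
    unfolding C_set_def stone_closed_def T_A_def using M by blast
  ultimately show ?thesis using that[OF M] by blast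
qed

lemma congruence_filter_subset_D_imp:
  assumes "congruence_filter imp F" and "F \<subseteq> x" and "is_filter G"
  shows "F \<subseteq> D_imp imp x G"
  unfolding D_imp_def
  using assms congruence_filter_imp is_filter_top by blast

context
  fixes imp :: "'a::boolean_algebra \<Rightarrow> 'a \<Rightarrow> 'a"
  assumes conditional: "conditional_algebra imp"
begin

lemma is_filter_imp_preimage:
  assumes x: "is_filter x"
  shows "is_filter {b. imp a b \<in> x}"
  unfolding is_filter_def
proof (intro conjI ballI allI impI; simp)
  show "imp a top \<in> x" using is_filter_top[OF x] by (simp add: imp_top[OF conditional])
next
  fix b c assume "imp a b \<in> x" "b \<le> c"
  then show "imp a c \<in> x" using is_filter_up[OF x] imp_mono[OF conditional] by blast
next
  fix b c assume "imp a b \<in> x" "imp a c \<in> x"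
  then show "imp a (inf b c) \<in> x" using is_filter_inf[OF x] by (simp add: imp_inf[OF conditional])
qed

lemma D_imp_principal:
  assumes "is_filter x"
  shows "D_imp imp x (principal a) \<subseteq> {b. imp a b \<in> x}"
  unfolding D_imp_def principal_def
  using is_filter_up[OF assms] imp_antimono[OF conditional] by blast

lemma D_imp_filter_join:
  assumes F: "congruence_filter imp F" and x: "is_filter x" "F \<subseteq> x"
  shows "D_imp imp x (filter_join F G) \<subseteq> D_imp imp x G"
proof
  fix c assume "c \<in> D_imp imp x (filter_join F G)"
  then obtain b f g where "imp b c \<in> x" "f \<in> F" "g \<in> G" "inf g f \<le> b"
    unfolding D_imp_def filter_join_def by (auto simp: inf_commute)
  then have "imp (inf g f) c \<in> x"
    using is_filter_up[OF x(1)] imp_antimono[OF conditional] by blast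
  moreover have "sup (- imp (inf g f) c) (imp g c) \<in> x"
    using congruence_filter_imp_inf[OF F \<open>f \<in> F\<close>] x(2) by blast
  ultimately have "imp g c \<in> x" by (rule is_filter_mp[OF x(1)])
  then show "c \<in> D_imp imp x G" unfolding D_imp_def using \<open>g \<in> G\<close> by blast
qed

text \<open>If Z = phi G is minimal in C x y, the join of F and G yields an element of C x y
  below Z, so by minimality F \<subseteq> G.\<close>
lemma TA_closed_phi:
  assumes F: "congruence_filter imp F"
  shows "TA_closed imp (phi F)"
proof -
  have "Z \<subseteq> phi F \<and> y \<in> phi F"
    if "x \<in> phi F" "y \<in> Ul" "Z \<in> C_set imp x y"
      and minimal: "\<forall>Z'\<in>C_set imp x y. Z' \<subseteq> Z \<longrightarrow> Z' = Z" for x y Z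
  proof -
    have x: "is_filter x" "F \<subseteq> x" using \<open>x \<in> phi F\<close> Ul_filter unfolding phi_def by auto
    obtain G where G: "is_filter G" "Z = phi G" "D_imp imp x G \<subseteq> y"
      using \<open>Z \<in> C_set imp x y\<close> unfolding C_set_def T_A_def by blast
    let ?J = "filter_join F G"
    have J: "is_filter ?J" using is_filter_join[OF congruence_filter_is_filter[OF F] G(1)] .
    have "phi ?J \<in> C_set imp x y"
      unfolding C_set_def stone_closed_def T_A_def
      using J D_imp_filter_join[OF F x] G(3) by blast
    moreover have "phi ?J \<subseteq> Z"
      using phi_subset_phi_iff[OF G(1) J] filter_join_upper2[OF congruence_filter_is_filter[OF F]] G(2)
      by blast
    ultimately have "phi ?J = phi G" using minimal G(2) by blast
    then have "F \<subseteq> G"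
      using phi_subset_phi_iff[OF J G(1)] filter_join_upper1[OF G(1), of F] by blast
    then have "Z \<subseteq> phi F" using G(2) unfolding phi_def by blast
    moreover have "F \<subseteq> y" using congruence_filter_subset_D_imp[OF F x(2) G(1)] G(3) by blast
    ultimately show ?thesis using \<open>y \<in> Ul\<close> unfolding phi_def by blast
  qed
  moreover have "stone_closed (phi F)"
    unfolding stone_closed_def using congruence_filter_is_filter[OF F] by blast
  ultimately show ?thesis unfolding TA_closed_def by blast
qed

text \<open>Refuting imp a e at x: extend {b. imp a b \<in> x} to an ultrafilter y omitting e and
  take a minimal element of C x y above principal a; T_A-closedness puts it and y in phi F.\<close>
lemma TA_closed_phiE:
  assumes TA: "TA_closed imp (phi F)" and F: "is_filter F"
    and x: "x \<in> Ul" "F \<subseteq> x" and "imp a e \<notin> x"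
  obtains y M where "e \<notin> y" "F \<subseteq> y" "is_filter M" "a \<in> M" "F \<subseteq> M" "D_imp imp x M \<subseteq> y"
proof -
  have x_filter: "is_filter x" using Ul_filter[OF x(1)] .
  have "e \<notin> {b. imp a b \<in> x}" using \<open>imp a e \<notin> x\<close> by simp
  then obtain y where y: "y \<in> Ul" "{b. imp a b \<in> x} \<subseteq> y" "e \<notin> y"
    by (rule ultrafilter_extension[OF is_filter_imp_preimage[OF x_filter]])
  then have "D_imp imp x (principal a) \<subseteq> y" using D_imp_principal[OF x_filter] by blast
  then obtain M where M: "is_filter M" "principal a \<subseteq> M" "D_imp imp x M \<subseteq> y" "phi M \<in> C_set imp x y"
    and minimal: "\<forall>Z\<in>C_set imp x y. Z \<subseteq> phi M \<longrightarrow> Z = phi M"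
    by (rule minimal_C_set_exists[OF is_filter_principal])
  have "x \<in> phi F" using x unfolding phi_def by blast
  then have "phi M \<subseteq> phi F" "y \<in> phi F"
    using TA x(1) y(1) M(4) minimal unfolding TA_closed_def by blast+
  then have "F \<subseteq> M" "F \<subseteq> y" using phi_subset_phi_iff[OF F M(1)] unfolding phi_def by blast+
  moreover have "a \<in> M" using M(2) unfolding principal_def by blast
  ultimately show ?thesis using that y(3) M(1,3) by blast
qed

lemma congruence_filter_if_TA_closed_phi:
  assumes TA: "TA_closed imp (phi F)" and F: "is_filter F"
  shows "congruence_filter imp F"
proof -
  have "imp a f \<in> F" if "f \<in> F" for f a
  proof (rule ccontr)
    assume "imp a f \<notin> F"
    then obtain x where "x \<in> Ul" "F \<subseteq> x" "imp a f \<notin> x" by (rule ultrafilter_extension[OF F])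
    then obtain y M where "f \<notin> y" "F \<subseteq> y" "is_filter M" "a \<in> M" "F \<subseteq> M" "D_imp imp x M \<subseteq> y"
      by (rule TA_closed_phiE[OF TA F])
    then show False using \<open>f \<in> F\<close> by blast
  qed
  moreover have "sup (- imp (inf a f) c) (imp a c) \<in> F" if "f \<in> F" for f a c
  proof (rule ccontr)
    assume "sup (- imp (inf a f) c) (imp a c) \<notin> F"
    then obtain x where x: "x \<in> Ul" "F \<subseteq> x" "sup (- imp (inf a f) c) (imp a c) \<notin> x"
      by (rule ultrafilter_extension[OF F])
    note up = is_filter_up[OF Ul_filter[OF x(1)]]
    have "imp (inf a f) c \<in> x" using Ul_compl[OF x(1)] x(3) up[OF _ sup_ge1] by blast
    have "imp a c \<notin> x" using x(3) up[OF _ sup_ge2] by blast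
    with x(1,2) obtain y M
      where "c \<notin> y" "F \<subseteq> y" "is_filter M" "a \<in> M" "F \<subseteq> M" "D_imp imp x M \<subseteq> y"
      by (rule TA_closed_phiE[OF TA F])
    moreover have "inf a f \<in> M" using is_filter_inf calculation \<open>f \<in> F\<close> by blast
    ultimately show False using \<open>imp (inf a f) c \<in> x\<close> unfolding D_imp_def by blast
  qed
  ultimately show ?thesis unfolding congruence_filter_def using F by blast
qed

lemma TA_closed_iff: "TA_closed imp Y \<longleftrightarrow> (\<exists>F. congruence_filter imp F \<and> Y = phi F)"
proof
  assume "TA_closed imp Y"
  moreover obtain F where "is_filter F" "Y = phi F"
    using \<open>TA_closed imp Y\<close> unfolding TA_closed_def stone_closed_def by blast
  ultimately show "\<exists>F. congruence_filter imp F \<and> Y = phi F"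
    using congruence_filter_if_TA_closed_phi by blast
qed (use TA_closed_phi in blast)

lemma bij_betw_phi_TA_closed: "bij_betw phi {F. congruence_filter imp F} {Y. TA_closed imp Y}"
proof (rule bij_betw_imageI)
  show "inj_on phi {F. congruence_filter imp F}"
  proof (rule inj_onI)
    fix F G assume "F \<in> {F. congruence_filter imp F}" "G \<in> {F. congruence_filter imp F}"
    then have "is_filter F" "is_filter G" by (simp_all add: congruence_filter_is_filter)
    moreover assume "phi F = phi G"
    ultimately show "F = G" using phi_subset_phi_iff[of F G] phi_subset_phi_iff[of G F] by auto
  qed
  show "phi ` {F. congruence_filter imp F} = {Y. TA_closed imp Y}"
    using TA_closed_iff by auto
qed

end

theorem theorem8p4:
  fixes imp :: "'a::boolean_algebra \<Rightarrow> 'a \<Rightarrow> 'a"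
  assumes "conditional_algebra imp"
  shows "\<exists>f. bij_betw f {\<theta>. congruence imp \<theta>} {Y. TA_closed imp Y} \<and>
    (\<forall>\<theta>\<in>{\<theta>. congruence imp \<theta>}. \<forall>\<psi>\<in>{\<theta>. congruence imp \<theta>}.
        \<theta> \<subseteq> \<psi> \<longleftrightarrow> f \<psi> \<subseteq> f \<theta>)"
proof (intro exI conjI ballI)
  show "bij_betw (phi \<circ> top_class) {\<theta>. congruence imp \<theta>} {Y. TA_closed imp Y}"
    using bij_betw_trans[OF bij_betw_top_class[OF assms] bij_betw_phi_TA_closed[OF assms]] .
next
  fix \<theta> \<psi> assume "\<theta> \<in> {\<theta>. congruence imp \<theta>}" "\<psi> \<in> {\<theta>. congruence imp \<theta>}"
  then have \<theta>: "congruence imp \<theta>" and \<psi>: "congruence imp \<psi>" by simp_all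
  have "\<theta> \<subseteq> \<psi> \<longleftrightarrow> top_class \<theta> \<subseteq> top_class \<psi>" using top_class_subset_iff[OF \<theta> \<psi>] ..
  also have "\<dots> \<longleftrightarrow> phi (top_class \<psi>) \<subseteq> phi (top_class \<theta>)"
    using phi_subset_phi_iff[OF is_filter_top_class[OF \<theta>] is_filter_top_class[OF \<psi>]] ..
  finally show "\<theta> \<subseteq> \<psi> \<longleftrightarrow> (phi \<circ> top_class) \<psi> \<subseteq> (phi \<circ> top_class) \<theta>" by simp
qed

end
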